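(* Let $R$ be a finite chain ring with maximal ideal $\mathfrak{m}$ and residue field $\mathbb{F}_q$, and let $\pi:R\to\mathbb{F}_q$ be the natural projection. Let $\lambda_1,\lambda_2$ be units of $R$ with $\pi(\lambda_1)\neq\pi(\lambda_2)$. For $i=1,2$, let $C_i$ be a free $\lambda_i$-constacyclic code over $R$ of length $n$, and suppose $C_1\cap C_2$ is both $\lambda_1$-constacyclic and $\lambda_2$-constacyclic. Then $C_1\cap C_2=R^n$ or $C_1\cap C_2=\{\mathbf{0}\}$.
   Context: A finite chain ring is a finite commutative local ring whose ideals form a chain. A linear code $C\subseteq R^n$ (an $R$-submodule) is $\lambda$-constacyclic if $(\lambda c_{n-1},c_0,\dots,c_{n-2})\in C$ whenever $(c_0,\dots,c_{n-1})\in C$; free means free as an $R$-module. $\pi(r)=r+\mathfrak{m}$. *)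

theory Defs
  imports Main
begin

definition is_ideal :: "'a::comm_ring_1 set \<Rightarrow> bool" where
  "is_ideal I \<longleftrightarrow> 0 \<in> I \<and> (\<forall>x\<in>I. \<forall>y\<in>I. x + y \<in> I) \<and> (\<forall>r. \<forall>x\<in>I. r * x \<in> I)"

definition maximal_ideal :: "'a::comm_ring_1 set \<Rightarrow> bool" where
  "maximal_ideal m \<longleftrightarrow> is_ideal m \<and> m \<noteq> UNIV \<and>
     (\<forall>J. is_ideal J \<and> m \<subseteq> J \<longrightarrow> J = m \<or> J = UNIV)"

definition finite_chain_ring :: "'a::comm_ring_1 itself \<Rightarrow> bool" where
  "finite_chain_ring _ \<longleftrightarrow> finite (UNIV :: 'a set) \<and>
     (\<exists>!m::'a set. maximal_ideal m) \<and>
     (\<forall>I J :: 'a set. is_ideal I \<and> is_ideal J \<longrightarrow> I \<subseteq> J \<or> J \<subseteq> I)"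

definition proj :: "'a::comm_ring_1 set \<Rightarrow> 'a \<Rightarrow> 'a set" where
  "proj m r = {r + x | x. x \<in> m}"

text \<open>R^n: words of length n, represented as functions nat => R vanishing from index n on.\<close>
definition words :: "nat \<Rightarrow> (nat \<Rightarrow> 'a::comm_ring_1) set" where
  "words n = {c. \<forall>i\<ge>n. c i = 0}"

definition linear_code :: "nat \<Rightarrow> (nat \<Rightarrow> 'a::comm_ring_1) set \<Rightarrow> bool" where
  "linear_code n C \<longleftrightarrow> C \<subseteq> words n \<and> (\<lambda>_. 0) \<in> C \<and>
     (\<forall>c\<in>C. \<forall>d\<in>C. (\<lambda>i. c i + d i) \<in> C) \<and>
     (\<forall>r. \<forall>c\<in>C. (\<lambda>i. r * c i) \<in> C)"

definition constashift :: "'a::comm_ring_1 \<Rightarrow> nat \<Rightarrow> (nat \<Rightarrow> 'a) \<Rightarrow> (nat \<Rightarrow> 'a)" where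
  "constashift lam n c = (\<lambda>i. if i = 0 then lam * c (n - 1) else if i < n then c (i - 1) else 0)"

definition constacyclic :: "'a::comm_ring_1 \<Rightarrow> nat \<Rightarrow> (nat \<Rightarrow> 'a) set \<Rightarrow> bool" where
  "constacyclic lam n C \<longleftrightarrow> linear_code n C \<and> (\<forall>c\<in>C. constashift lam n c \<in> C)"

definition free_code :: "(nat \<Rightarrow> 'a::comm_ring_1) set \<Rightarrow> bool" where
  "free_code C \<longleftrightarrow> (\<exists>B. finite B \<and> B \<subseteq> C \<and>
     (\<forall>r. (\<lambda>i. \<Sum>b\<in>B. r b * b i) = (\<lambda>_. 0) \<longrightarrow> (\<forall>b\<in>B. r b = 0)) \<and>
     (\<forall>c\<in>C. \<exists>r. c = (\<lambda>i. \<Sum>b\<in>B. r b * b i)))"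

end

theory Submission
  imports Defs "HOL-Library.FuncSet"
begin

text \<open>Since \<open>\<pi>(\<lambda>\<^sub>1) \<noteq> \<pi>(\<lambda>\<^sub>2)\<close>, the difference \<open>\<lambda>\<^sub>1 - \<lambda>\<^sub>2\<close> is a unit. For a codeword \<open>c\<close> of
  \<open>D = C\<^sub>1 \<inter> C\<^sub>2\<close> the \<open>\<lambda>\<^sub>1\<close>- and \<open>\<lambda>\<^sub>2\<close>-shifts differ only in position \<open>0\<close>, by
  \<open>(\<lambda>\<^sub>1 - \<lambda>\<^sub>2) c\<^sub>n\<^sub>-\<^sub>1\<close>; after shifting, any nonzero coordinate \<open>y\<close> of a codeword can thus be
  isolated, and then \<open>D\<close> contains every word with entries in \<open>yR\<close>. In a chain ring every
  nonzero principal ideal contains the socle \<open>Ann(m)\<close>, which is nonzero since \<open>R\<close> is finite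
  and local. So if \<open>D \<noteq> 0\<close>, each \<open>C\<^sub>i\<close> contains all words over \<open>Ann(m)\<close>. Counting the
  elements of a free code with basis \<open>B\<close> that are killed by \<open>m\<close> in coordinates gives
  \<open>|Ann(m)|\<^sup>n = |Ann(m)|\<^bsup>|B|\<^esup>\<close>, so \<open>|B| = n\<close> and the code is all of \<open>R\<^sup>n\<close>. Hence
  \<open>C\<^sub>1 = C\<^sub>2 = R\<^sup>n\<close>.\<close>

section \<open>Finite chain rings\<close>

definition ideals_form_chain :: "'a::comm_ring_1 itself \<Rightarrow> bool" where
  "ideals_form_chain _ \<longleftrightarrow> (\<forall>I J :: 'a set. is_ideal I \<and> is_ideal J \<longrightarrow> I \<subseteq> J \<or> J \<subseteq> I)"

definition annihilator :: "'a::comm_ring_1 set \<Rightarrow> 'a set" where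
  "annihilator M = {s. \<forall>t\<in>M. s * t = 0}"

lemma finite_chain_ringD:
  assumes "finite_chain_ring TYPE('a::comm_ring_1)"
  shows "finite (UNIV :: 'a set)" "ideals_form_chain TYPE('a)"
  using assms unfolding finite_chain_ring_def ideals_form_chain_def by blast+

lemma is_idealD:
  assumes "is_ideal I"
  shows is_ideal_zero: "0 \<in> I"
    and is_ideal_add: "x \<in> I \<Longrightarrow> y \<in> I \<Longrightarrow> x + y \<in> I"
    and is_ideal_mult: "x \<in> I \<Longrightarrow> r * x \<in> I"
  using assms unfolding is_ideal_def by blast+

lemma is_ideal_uminus: "is_ideal I \<Longrightarrow> x \<in> I \<Longrightarrow> - x \<in> I"
  using is_ideal_mult[of I x "- 1"] by simp

lemma is_ideal_principal: "is_ideal (range ((*) (x::'a::comm_ring_1)))"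
  unfolding is_ideal_def
proof (intro conjI ballI allI)
  show "0 \<in> range ((*) x)" by (metis mult_zero_right rangeI)
  fix a b assume "a \<in> range ((*) x)" "b \<in> range ((*) x)"
  then obtain u v where "a = x * u" "b = x * v" by blast
  then have "a + b = x * (u + v)" by (simp add: distrib_left)
  then show "a + b \<in> range ((*) x)" by blast
next
  fix r a assume "a \<in> range ((*) x)"
  then obtain u where "a = x * u" by blast
  then have "r * a = x * (r * u)" by (simp add: mult.left_commute)
  then show "r * a \<in> range ((*) x)" by blast
qed

lemma in_principal_self: "(x::'a::comm_ring_1) \<in> range ((*) x)"
  by (metis mult.right_neutral rangeI)

lemma maximal_ideal_is_ideal: "maximal_ideal m \<Longrightarrow> is_ideal m"
  unfolding maximal_ideal_def by blast

lemma one_not_in_maximal_ideal: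
  assumes "maximal_ideal m"
  shows "(1::'a::comm_ring_1) \<notin> m"
proof
  assume "1 \<in> m"
  then have "r \<in> m" for r
    using is_ideal_mult[OF maximal_ideal_is_ideal[OF assms]] by (metis mult.right_neutral)
  then show False using assms unfolding maximal_ideal_def by blast
qed

lemma one_minus_not_in_maximal_ideal:
  assumes "maximal_ideal m" "a \<in> m"
  shows "1 - a \<notin> m"
proof
  assume "1 - a \<in> m"
  with assms have "(1 - a) + a \<in> m" using is_ideal_add maximal_ideal_is_ideal by blast
  with one_not_in_maximal_ideal[OF assms(1)] show False by simp
qed

lemma unit_if_not_in_maximal_ideal:
  fixes m :: "'a::comm_ring_1 set"
  assumes chain: "ideals_form_chain TYPE('a)" and max: "maximal_ideal m" and "t \<notin> m"
  shows "t dvd 1"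
proof -
  have "range ((*) t) \<subseteq> m \<or> m \<subseteq> range ((*) t)"
    using chain is_ideal_principal maximal_ideal_is_ideal[OF max]
    unfolding ideals_form_chain_def by blast
  then have "m \<subseteq> range ((*) t)"
    using \<open>t \<notin> m\<close> in_principal_self by blast
  then have "range ((*) t) = m \<or> range ((*) t) = UNIV"
    using max is_ideal_principal unfolding maximal_ideal_def by blast
  then have "range ((*) t) = UNIV"
    using \<open>t \<notin> m\<close> in_principal_self by blast
  then show ?thesis by (metis dvdI rangeE UNIV_I)
qed

text \<open>In a finite local ring, a nonzero element generating a principal ideal of least size
  is killed by the maximal ideal: otherwise \<open>z = z t s\<close> with \<open>t \<in> m\<close>, and \<open>1 - t s\<close> is a unit.\<close>

lemma annihilator_maximal_ideal_nonzero:
  fixes m :: "'a::comm_ring_1 set"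
  assumes fin: "finite (UNIV :: 'a set)" and max: "maximal_ideal m"
    and units: "\<And>t. t \<notin> m \<Longrightarrow> t dvd 1"
  shows "annihilator m \<noteq> {0}"
proof -
  have "(1::'a) \<noteq> 0"
    using one_not_in_maximal_ideal[OF max] is_ideal_zero[OF maximal_ideal_is_ideal[OF max]]
    by metis
  then obtain z :: 'a where "z \<noteq> 0"
    and least: "\<And>w::'a. w \<noteq> 0 \<Longrightarrow> card (range ((*) z)) \<le> card (range ((*) w))"
    using ex_has_least_nat[of "\<lambda>z::'a. z \<noteq> 0" 1 "\<lambda>z. card (range ((*) z))"] by blast
  have "z * t = 0" if "t \<in> m" for t
  proof (rule ccontr)
    assume "z * t \<noteq> 0"
    have sub: "range ((*) (z * t)) \<subseteq> range ((*) z)" by (auto simp: mult.assoc)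
    have "range ((*) (z * t)) = range ((*) z)"
      using card_subset_eq[OF finite_subset[OF subset_UNIV fin] sub] least[OF \<open>z * t \<noteq> 0\<close>]
        card_mono[OF finite_subset[OF subset_UNIV fin] sub] by simp
    then obtain s where s: "z = z * t * s" using in_principal_self[of z] by (metis imageE)
    have "t * s \<in> m"
      using is_ideal_mult[OF maximal_ideal_is_ideal[OF max] \<open>t \<in> m\<close>] by (metis mult.commute)
    then obtain u where u: "1 = (1 - t * s) * u"
      using units one_minus_not_in_maximal_ideal[OF max] by (meson dvdE)
    have "z = z * (1 - t * s) * u" using u by (simp add: mult.assoc)
    also have "\<dots> = 0" using s by (simp add: algebra_simps)
    finally show False using \<open>z \<noteq> 0\<close> by simp
  qed
  then have "z \<in> annihilator m" unfolding annihilator_def by blast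
  with \<open>z \<noteq> 0\<close> show ?thesis by blast
qed

lemma annihilator_maximal_ideal_subset_principal:
  fixes m :: "'a::comm_ring_1 set"
  assumes chain: "ideals_form_chain TYPE('a)" and max: "maximal_ideal m" and "y \<noteq> 0"
  shows "annihilator m \<subseteq> range ((*) y)"
proof
  fix s assume s: "s \<in> annihilator m"
  have "range ((*) s) \<subseteq> range ((*) y) \<or> range ((*) y) \<subseteq> range ((*) s)"
    using chain is_ideal_principal unfolding ideals_form_chain_def by blast
  then show "s \<in> range ((*) y)"
  proof
    assume "range ((*) y) \<subseteq> range ((*) s)"
    then obtain a where a: "y = s * a" using in_principal_self[of y] by blast
    have "a \<notin> m" using a s \<open>y \<noteq> 0\<close> unfolding annihilator_def by auto
    then obtain b where "1 = a * b"
      using unit_if_not_in_maximal_ideal[OF chain max] by (meson dvdE)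
    then have "s = y * b" using a by (metis mult.assoc mult.right_neutral)
    then show ?thesis by blast
  qed (use in_principal_self in blast)
qed

lemma proj_eq_if_diff_in_ideal:
  assumes ideal: "is_ideal m" and "a - b \<in> m"
  shows "proj m a = proj m b"
proof -
  have shift: "proj m a \<subseteq> proj m b" if "a - b \<in> m" for a b
  proof
    fix z assume "z \<in> proj m a"
    then obtain x where "z = a + x" "x \<in> m" unfolding proj_def by blast
    moreover have "(a - b) + x \<in> m" using is_ideal_add[OF ideal that \<open>x \<in> m\<close>] .
    ultimately show "z \<in> proj m b" unfolding proj_def by (auto intro!: exI[of _ "(a - b) + x"])
  qed
  have "b - a \<in> m"
    using is_ideal_uminus[OF ideal \<open>a - b \<in> m\<close>] by simp
  then show ?thesis using shift \<open>a - b \<in> m\<close> by blast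
qed

lemma unit_diff_if_proj_neq:
  fixes m :: "'a::comm_ring_1 set"
  assumes "ideals_form_chain TYPE('a)" "maximal_ideal m" "proj m a \<noteq> proj m b"
  shows "(a - b) dvd 1"
  using assms unit_if_not_in_maximal_ideal proj_eq_if_diff_in_ideal maximal_ideal_is_ideal by blast

section \<open>Linear and free codes\<close>

definition words_over :: "nat \<Rightarrow> 'a::comm_ring_1 set \<Rightarrow> (nat \<Rightarrow> 'a) set" where
  "words_over n S = {c \<in> words n. \<forall>i. c i \<in> S}"

lemma words_over_UNIV [simp]: "words_over n UNIV = words n"
  unfolding words_over_def by simp

lemma words_over_mono: "S \<subseteq> T \<Longrightarrow> words_over n S \<subseteq> words_over n T"
  unfolding words_over_def by blast

lemma bij_betw_restrict_words_over:
  assumes "0 \<in> S"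
  shows "bij_betw (\<lambda>c. restrict c {..<n}) (words_over n S) (PiE {..<n} (\<lambda>_. S))"
proof (rule bij_betw_byWitness[where f' = "\<lambda>g i. if i < n then g i else 0"])
  show "\<forall>c\<in>words_over n S. (\<lambda>i. if i < n then restrict c {..<n} i else 0) = c"
    unfolding words_over_def words_def by (simp add: fun_eq_iff)
  show "\<forall>g\<in>PiE {..<n} (\<lambda>_. S). restrict (\<lambda>i. if i < n then g i else 0) {..<n} = g"
  proof
    fix g assume "g \<in> PiE {..<n} (\<lambda>_. S)"
    then show "restrict (\<lambda>i. if i < n then g i else 0) {..<n} = g"
      by (intro extensionalityI[of _ "{..<n}"]) (simp_all add: PiE_iff)
  qed
  show "(\<lambda>g i. if i < n then g i else 0) ` PiE {..<n} (\<lambda>_. S) \<subseteq> words_over n S"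
    using assms by (intro image_subsetI) (simp add: words_over_def words_def PiE_iff)
  show "(\<lambda>c. restrict c {..<n}) ` words_over n S \<subseteq> PiE {..<n} (\<lambda>_. S)"
    by (intro image_subsetI) (simp add: words_over_def)
qed

lemma
  assumes "0 \<in> S" "finite S"
  shows finite_words_over: "finite (words_over n S)"
    and card_words_over: "card (words_over n S) = card S ^ n"
  using bij_betw_restrict_words_over[OF assms(1), of n] assms(2)
  by (auto simp: bij_betw_finite bij_betw_same_card card_PiE finite_PiE)

lemma linear_codeD:
  assumes "linear_code n C"
  shows linear_code_subset_words: "C \<subseteq> words n"
    and linear_code_zero: "(\<lambda>_. 0) \<in> C"
    and linear_code_add: "c \<in> C \<Longrightarrow> d \<in> C \<Longrightarrow> (\<lambda>i. c i + d i) \<in> C"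
    and linear_code_smult: "c \<in> C \<Longrightarrow> (\<lambda>i. r * c i) \<in> C"
  using assms unfolding linear_code_def by blast+

lemma linear_code_sum:
  assumes "linear_code n C" "finite A" "\<And>a. a \<in> A \<Longrightarrow> f a \<in> C"
  shows "(\<lambda>i. \<Sum>a\<in>A. f a i) \<in> C"
  using assms(2,3)
proof (induction A rule: finite_induct)
  case empty
  then show ?case using linear_code_zero[OF assms(1)] by simp
next
  case (insert x A)
  then have "(\<lambda>i. f x i + (\<Sum>a\<in>A. f a i)) \<in> C"
    using linear_code_add[OF assms(1)] by blast
  then show ?case using insert.hyps by simp
qed

lemma linear_code_diff:
  assumes "linear_code n C" "c \<in> C" "d \<in> C"
  shows "(\<lambda>i. c i - d i) \<in> C"
  using linear_code_add[OF assms(1,2) linear_code_smult[OF assms(1,3), of "- 1"]] by simp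

lemma linear_code_nonzero_coordinate:
  assumes code: "linear_code n C" and "C \<noteq> {\<lambda>_. 0}"
  obtains c j where "c \<in> C" "j < n" "c j \<noteq> 0"
proof -
  obtain c where "c \<in> C" "c \<noteq> (\<lambda>_. 0)" using assms linear_code_zero[OF code] by blast
  then obtain j where "c j \<noteq> 0" by (auto simp: fun_eq_iff)
  moreover have "c \<in> words n" using \<open>c \<in> C\<close> linear_code_subset_words[OF code] by blast
  ultimately have "j < n" unfolding words_def using not_less by blast
  with \<open>c \<in> C\<close> \<open>c j \<noteq> 0\<close> show ?thesis using that by blast
qed

definition lincomb :: "(nat \<Rightarrow> 'a) set \<Rightarrow> ((nat \<Rightarrow> 'a) \<Rightarrow> 'a) \<Rightarrow> nat \<Rightarrow> 'a::comm_ring_1" where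
  "lincomb B r = (\<lambda>i. \<Sum>b\<in>B. r b * b i)"

lemma free_code_iff_lincomb:
  "free_code C \<longleftrightarrow> (\<exists>B. finite B \<and> B \<subseteq> C \<and>
     (\<forall>r. lincomb B r = (\<lambda>_. 0) \<longrightarrow> (\<forall>b\<in>B. r b = 0)) \<and> (\<forall>c\<in>C. \<exists>r. c = lincomb B r))"
  unfolding free_code_def lincomb_def ..

lemma lincomb_in_linear_code:
  assumes "linear_code n C" "finite B" "B \<subseteq> C"
  shows "lincomb B r \<in> C"
  unfolding lincomb_def
  by (rule linear_code_sum[OF assms(1,2)]) (use assms(3) linear_code_smult[OF assms(1)] in blast)

lemma lincomb_restrict [simp]: "lincomb B (restrict r B) = lincomb B r"
  unfolding lincomb_def by simp

lemma lincomb_scale: "(\<lambda>i. t * lincomb B r i) = lincomb B (\<lambda>b. t * r b)"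
  unfolding lincomb_def by (simp add: sum_distrib_left mult.assoc)

lemma lincomb_diff: "lincomb B (\<lambda>b. r b - r' b) = (\<lambda>i. lincomb B r i - lincomb B r' i)"
  unfolding lincomb_def by (simp add: algebra_simps sum_subtractf)

lemma inj_on_lincomb:
  assumes indep: "\<forall>r. lincomb B r = (\<lambda>_. 0) \<longrightarrow> (\<forall>b\<in>B. r b = 0)"
  shows "inj_on (lincomb B) (extensional B)"
proof (rule inj_onI)
  fix r r' assume "r \<in> extensional B" "r' \<in> extensional B" "lincomb B r = lincomb B r'"
  moreover have "lincomb B (\<lambda>b. r b - r' b) = (\<lambda>_. 0)"
    using lincomb_diff[of B r r'] \<open>lincomb B r = lincomb B r'\<close> by simp
  then have "\<forall>b\<in>B. r b - r' b = 0" using indep by blast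
  ultimately show "r = r'" by (auto intro: extensionalityI)
qed

lemma lincomb_annihilated_iff:
  assumes indep: "\<forall>r. lincomb B r = (\<lambda>_. 0) \<longrightarrow> (\<forall>b\<in>B. r b = 0)"
  shows "(\<forall>i. lincomb B r i \<in> annihilator M) \<longleftrightarrow> (\<forall>b\<in>B. r b \<in> annihilator M)"
proof -
  have "(\<forall>i. lincomb B r i * t = 0) \<longleftrightarrow> (\<forall>b\<in>B. r b * t = 0)" for t
  proof -
    have "(\<forall>i. lincomb B r i * t = 0) \<longleftrightarrow> lincomb B (\<lambda>b. t * r b) = (\<lambda>_. 0)"
      unfolding lincomb_scale[symmetric] by (simp add: fun_eq_iff mult.commute)
    also have "\<dots> \<longleftrightarrow> (\<forall>b\<in>B. t * r b = 0)"
      using indep unfolding lincomb_def by auto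
    finally show ?thesis by (simp add: mult.commute)
  qed
  then show ?thesis unfolding annihilator_def by blast
qed

lemma lincomb_image_eq_code:
  assumes "linear_code n F" "finite B" "B \<subseteq> F" and span: "\<forall>c\<in>F. \<exists>r. c = lincomb B r"
  shows "lincomb B ` PiE B (\<lambda>_. UNIV) = F"
proof (intro equalityI subsetI)
  fix c assume "c \<in> lincomb B ` PiE B (\<lambda>_. UNIV)"
  then show "c \<in> F" using lincomb_in_linear_code[OF assms(1-3)] by (elim imageE) simp
next
  fix c assume "c \<in> F"
  then obtain r where "c = lincomb B r" using span by blast
  then have "c = lincomb B (restrict r B)" by simp
  moreover have "restrict r B \<in> PiE B (\<lambda>_. UNIV)" by simp
  ultimately show "c \<in> lincomb B ` PiE B (\<lambda>_. UNIV)" by (rule rev_image_eqI[rotated])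
qed

lemma lincomb_image_annihilator:
  assumes indep: "\<forall>r. lincomb B r = (\<lambda>_. 0) \<longrightarrow> (\<forall>b\<in>B. r b = 0)"
  shows "{c \<in> lincomb B ` PiE B (\<lambda>_. UNIV). \<forall>i. c i \<in> annihilator M}
    = lincomb B ` PiE B (\<lambda>_. annihilator M)"
proof (intro equalityI subsetI)
  fix c assume c: "c \<in> {c \<in> lincomb B ` PiE B (\<lambda>_. UNIV). \<forall>i. c i \<in> annihilator M}"
  then have "c \<in> lincomb B ` PiE B (\<lambda>_. UNIV)" by simp
  then obtain r where r: "r \<in> PiE B (\<lambda>_. UNIV)" "c = lincomb B r" by (rule imageE)
  have "\<forall>b\<in>B. r b \<in> annihilator M"
    using c lincomb_annihilated_iff[OF indep, of r M] r(2) by simp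
  then have "r \<in> PiE B (\<lambda>_. annihilator M)" using r(1) by (simp add: PiE_iff)
  then show "c \<in> lincomb B ` PiE B (\<lambda>_. annihilator M)" unfolding r(2) by (rule imageI)
next
  fix c assume "c \<in> lincomb B ` PiE B (\<lambda>_. annihilator M)"
  then obtain r where r: "r \<in> PiE B (\<lambda>_. annihilator M)" "c = lincomb B r" by (rule imageE)
  then have "r \<in> PiE B (\<lambda>_. UNIV)" by (simp add: PiE_iff)
  then have "c \<in> lincomb B ` PiE B (\<lambda>_. UNIV)" unfolding r(2) by (rule imageI)
  moreover have "\<forall>i. c i \<in> annihilator M"
    using r lincomb_annihilated_iff[OF indep, of r M] by (simp add: PiE_iff)
  ultimately show "c \<in> {c \<in> lincomb B ` PiE B (\<lambda>_. UNIV). \<forall>i. c i \<in> annihilator M}" by simp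
qed

lemma free_code_eq_words:
  fixes F :: "(nat \<Rightarrow> 'a::comm_ring_1) set"
  assumes fin: "finite (UNIV :: 'a set)"
    and code: "linear_code n F" and "free_code F"
    and socle: "words_over n (annihilator M) \<subseteq> F"
    and nontriv: "annihilator M \<noteq> {0}"
  shows "F = words n"
proof -
  obtain B where "finite B" "B \<subseteq> F"
    and indep: "\<forall>r. lincomb B r = (\<lambda>_. 0) \<longrightarrow> (\<forall>b\<in>B. r b = 0)"
    and span: "\<forall>c\<in>F. \<exists>r. c = lincomb B r"
    using \<open>free_code F\<close> unfolding free_code_iff_lincomb by blast
  define S where "S = annihilator M"
  have "0 \<in> S" unfolding S_def annihilator_def by simp
  have "finite S" using finite_subset[OF subset_UNIV fin] .
  have inj: "inj_on (lincomb B) (PiE B (\<lambda>_. T))" for T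
    unfolding PiE_def by (rule inj_on_subset[OF inj_on_lincomb[OF indep] Int_lower2])
  have F_eq: "F = lincomb B ` PiE B (\<lambda>_. UNIV)"
    using lincomb_image_eq_code[OF code \<open>finite B\<close> \<open>B \<subseteq> F\<close> span] by simp
  have F_words: "F \<subseteq> words n" using linear_code_subset_words[OF code] .
  have "card S ^ n = card (words_over n S)"
    using card_words_over[OF \<open>0 \<in> S\<close> \<open>finite S\<close>] by simp
  also have "words_over n S = {c \<in> F. \<forall>i. c i \<in> S}"
    using socle F_words unfolding words_over_def S_def by blast
  also have "\<dots> = lincomb B ` PiE B (\<lambda>_. S)"
    unfolding F_eq S_def by (rule lincomb_image_annihilator[OF indep])
  also have "card \<dots> = card S ^ card B"
    using card_image[OF inj] by (simp add: card_PiE \<open>finite B\<close>)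
  finally have "card S ^ n = card S ^ card B" .
  moreover have "1 < card S"
  proof -
    obtain s where "s \<in> S" "s \<noteq> 0" using nontriv \<open>0 \<in> S\<close> unfolding S_def by blast
    then have "card {0, s} \<le> card S" using \<open>0 \<in> S\<close> \<open>finite S\<close> by (intro card_mono) auto
    then show ?thesis using \<open>s \<noteq> 0\<close> by simp
  qed
  ultimately have "card B = n" by simp
  have "card F = card (PiE B (\<lambda>_. UNIV :: 'a set))"
    unfolding F_eq by (rule card_image[OF inj])
  also have "\<dots> = card (words_over n (UNIV :: 'a set))"
    using card_words_over[of "UNIV :: 'a set" n] fin \<open>card B = n\<close> by (simp add: card_PiE \<open>finite B\<close>)
  finally have "card F = card (words n :: (nat \<Rightarrow> 'a) set)" by simp
  then show ?thesis
    using card_subset_eq[OF _ F_words] finite_words_over[of "UNIV :: 'a set" n] fin by simp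
qed

section \<open>Constacyclic codes\<close>

lemma constacyclicD:
  assumes "constacyclic lam n C"
  shows constacyclic_linear_code: "linear_code n C"
    and constacyclic_shift_closed: "c \<in> C \<Longrightarrow> constashift lam n c \<in> C"
  using assms unfolding constacyclic_def by blast+

lemma constacyclic_iterate_closed:
  assumes "constacyclic lam n C" "c \<in> C"
  shows "(constashift lam n ^^ k) c \<in> C"
  by (induction k) (simp_all add: assms constacyclic_shift_closed[OF assms(1)])

lemma constashift_iterate_apply:
  assumes "k \<le> i" "i < n"
  shows "(constashift lam n ^^ k) c i = c (i - k)"
  using assms
proof (induction k arbitrary: i)
  case (Suc k)
  have "(constashift lam n ^^ Suc k) c i = (constashift lam n ^^ k) c (i - 1)"
    using Suc.prems by (simp add: constashift_def)
  also have "\<dots> = c (i - 1 - k)" using Suc.prems by (intro Suc.IH) auto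
  finally show ?case by simp
qed simp

definition monom_word :: "nat \<Rightarrow> 'a::comm_ring_1 \<Rightarrow> nat \<Rightarrow> 'a" where
  "monom_word k z = (\<lambda>i. if i = k then z else 0)"

lemma word_eq_sum_monom_words:
  assumes "c \<in> words n"
  shows "c = (\<lambda>i. \<Sum>k<n. monom_word k (c k) i)"
proof
  fix i show "c i = (\<Sum>k<n. monom_word k (c k) i)"
    using assms by (cases "i < n") (simp_all add: monom_word_def words_def)
qed

lemma constashift_iterate_monom_word:
  assumes "k < n"
  shows "(constashift lam n ^^ k) (monom_word 0 z) = monom_word k z"
  using assms
proof (induction k)
  case (Suc k)
  then have "(constashift lam n ^^ Suc k) (monom_word 0 z) = constashift lam n (monom_word k z)"
    by simp
  also have "\<dots> = monom_word (Suc k) z"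
    using Suc.prems by (auto simp: constashift_def monom_word_def fun_eq_iff)
  finally show ?case .
qed simp

lemma constacyclic_words_over_principal:
  assumes cyc: "constacyclic lam n C" and y: "monom_word 0 y \<in> C"
  shows "words_over n (range ((*) y)) \<subseteq> C"
proof
  fix c assume c: "c \<in> words_over n (range ((*) y))"
  note code = constacyclic_linear_code[OF cyc]
  have monoms: "monom_word k (c k) \<in> C" if "k < n" for k
  proof -
    obtain r where r: "c k = y * r" using c unfolding words_over_def by blast
    have "(\<lambda>i. r * monom_word 0 y i) = monom_word 0 (c k)"
      unfolding r by (simp add: monom_word_def fun_eq_iff mult.commute)
    then have "monom_word 0 (c k) \<in> C" using linear_code_smult[OF code y, of r] by simp
    then show ?thesis
      using constacyclic_iterate_closed[OF cyc, of _ k] constashift_iterate_monom_word[OF that]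
      by metis
  qed
  have "c = (\<lambda>i. \<Sum>k<n. monom_word k (c k) i)"
    using c unfolding words_over_def by (intro word_eq_sum_monom_words) simp
  also have "\<dots> \<in> C"
    by (rule linear_code_sum[OF code finite_lessThan]) (simp add: monoms)
  finally show "c \<in> C" .
qed

lemma bicyclic_code_monom_word_last:
  assumes cyc1: "constacyclic lam1 n C" and cyc2: "constacyclic lam2 n C"
    and "(lam1 - lam2) dvd 1" and "c \<in> C"
  shows "monom_word 0 (c (n - 1)) \<in> C"
proof -
  obtain v where v: "1 = (lam1 - lam2) * v" using \<open>(lam1 - lam2) dvd 1\<close> by (rule dvdE)
  note code = constacyclic_linear_code[OF cyc1]
  have "(\<lambda>i. constashift lam1 n c i - constashift lam2 n c i) \<in> C"
    using linear_code_diff[OF code] constacyclic_shift_closed[OF cyc1] constacyclic_shift_closed[OF cyc2]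
      \<open>c \<in> C\<close> by blast
  then have "(\<lambda>i. v * (constashift lam1 n c i - constashift lam2 n c i)) \<in> C"
    by (rule linear_code_smult[OF code])
  moreover have "v * (lam1 * x - lam2 * x) = x" for x
  proof -
    have "v * (lam1 * x - lam2 * x) = x * ((lam1 - lam2) * v)" by (simp add: algebra_simps)
    then show ?thesis using v by simp
  qed
  then have "(\<lambda>i. v * (constashift lam1 n c i - constashift lam2 n c i)) = monom_word 0 (c (n - 1))"
    by (simp add: fun_eq_iff constashift_def monom_word_def)
  ultimately show ?thesis by simp
qed

lemma bicyclic_code_monom_word:
  assumes cyc1: "constacyclic lam1 n C" and cyc2: "constacyclic lam2 n C"
    and unit: "(lam1 - lam2) dvd 1" and "c \<in> C" "j < n"
  shows "monom_word 0 (c j) \<in> C"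
proof -
  let ?d = "(constashift lam1 n ^^ (n - 1 - j)) c"
  have "?d \<in> C" using constacyclic_iterate_closed[OF cyc1 \<open>c \<in> C\<close>] .
  moreover have "?d (n - 1) = c j"
    using constashift_iterate_apply[of "n - 1 - j" "n - 1" n lam1 c] \<open>j < n\<close> by simp
  ultimately show ?thesis using bicyclic_code_monom_word_last[OF cyc1 cyc2 unit] by metis
qed

theorem proposition4p5:
  fixes m :: "'a::comm_ring_1 set"
    and lam1 lam2 :: 'a
    and n :: nat
    and C1 C2 :: "(nat \<Rightarrow> 'a) set"
  assumes "finite_chain_ring TYPE('a)"
    and "maximal_ideal m"
    and "lam1 dvd 1" and "lam2 dvd 1"
    and "proj m lam1 \<noteq> proj m lam2"
    and "constacyclic lam1 n C1" and "free_code C1"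
    and "constacyclic lam2 n C2" and "free_code C2"
    and "constacyclic lam1 n (C1 \<inter> C2)"
    and "constacyclic lam2 n (C1 \<inter> C2)"
  shows "C1 \<inter> C2 = words n \<or> C1 \<inter> C2 = {\<lambda>_. 0}"
proof (cases "C1 \<inter> C2 = {\<lambda>_. 0}")
  \<comment> \<open>Only \<open>lam1 - lam2\<close> needs to be a unit.\<close>
  case False
  note fin = finite_chain_ringD(1)[OF assms(1)] and chain = finite_chain_ringD(2)[OF assms(1)]
  have unit: "(lam1 - lam2) dvd 1" using unit_diff_if_proj_neq[OF chain assms(2,5)] .
  obtain c j where "c \<in> C1 \<inter> C2" "j < n" "c j \<noteq> 0"
    using linear_code_nonzero_coordinate[OF constacyclic_linear_code[OF assms(10)] False] .
  then have "monom_word 0 (c j) \<in> C1 \<inter> C2"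
    using bicyclic_code_monom_word[OF assms(10,11) unit] by blast
  then have socle: "words_over n (annihilator m) \<subseteq> C1 \<inter> C2"
    using constacyclic_words_over_principal[OF assms(10)]
      words_over_mono[OF annihilator_maximal_ideal_subset_principal[OF chain assms(2) \<open>c j \<noteq> 0\<close>]]
    by blast
  have nontriv: "annihilator m \<noteq> {0}"
    using annihilator_maximal_ideal_nonzero[OF fin assms(2) unit_if_not_in_maximal_ideal[OF chain assms(2)]] .
  have "C1 = words n"
    using free_code_eq_words[OF fin constacyclic_linear_code[OF assms(6)] assms(7) _ nontriv] socle by blast
  moreover have "C2 = words n"
    using free_code_eq_words[OF fin constacyclic_linear_code[OF assms(8)] assms(9) _ nontriv] socle by blast
  ultimately show ?thesis by simp
qed simp

end
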